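(* Let ${\cal M}$ be the set of matrix-valued functions $L(\lambda)=(1+\lambda^3)^{-1/3}\begin{pmatrix}1&\lambda f&0\\0&1&\lambda g\\\lambda h&0&1\end{pmatrix}$ with $f,g,h\in\mathbb C$, $fgh=1$ (a fixed branch of the cube root being used throughout). Let $L_i\in{\cal M}$, $i=1,2,3,4$, with parameters $(f_i,g_i,h_i)$, satisfy $L_1L_2=L_3L_4$, and suppose that the off-diagonal parts of $L_1,L_2$ are componentwise distinct from the off-diagonal parts of $L_3,L_4$ respectively (i.e. $f_1\ne f_3$, $g_1\ne g_3$, $h_1\ne h_3$, $f_2\ne f_4$, $g_2\ne g_4$, $h_2\ne h_4$). Then there exists $L_0\in{\cal M}$ such that $L_0L_1L_2=L_0L_3L_4=I$. *)

theory Defs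
  imports "HOL-Analysis.Analysis"
begin

definition Mpoly :: "complex \<Rightarrow> complex \<Rightarrow> complex \<Rightarrow> complex \<Rightarrow> complex^3^3" where
  "Mpoly f g h lam = vector [vector [1, lam * f, 0], vector [0, 1, lam * g], vector [lam * h, 0, 1]]"

definition Lmat :: "(complex \<Rightarrow> complex) \<Rightarrow> complex \<Rightarrow> complex \<Rightarrow> complex \<Rightarrow> complex \<Rightarrow> complex^3^3" where
  "Lmat cbrt f g h lam = (\<chi> i j. inverse (cbrt (1 + lam ^ 3)) * (Mpoly f g h lam $ i $ j))"

definition Ldom :: "complex set" where
  "Ldom = {lam. 1 + lam ^ 3 \<noteq> 0}"

end

theory Submission imports Defs begin

text \<open>Write \<open>M(f,g,h) = I + \<lambda> N(f,g,h)\<close>, where \<open>N\<close> carries \<open>f, g, h\<close> at the positions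
  (1,2), (2,3), (3,1). The quadratic part \<open>N\<^sub>1 N\<^sub>2\<close> of \<open>M\<^sub>1 M\<^sub>2\<close> lives on the complementary
  positions (1,3), (2,1), (3,2), so \<open>L\<^sub>1 L\<^sub>2 = L\<^sub>3 L\<^sub>4\<close> amounts to \<open>N\<^sub>1 + N\<^sub>2 = N\<^sub>3 + N\<^sub>4\<close> and
  \<open>N\<^sub>1 N\<^sub>2 = N\<^sub>3 N\<^sub>4\<close>. Together with \<open>f\<^sub>i g\<^sub>i h\<^sub>i = 1\<close> and \<open>f\<^sub>1 \<noteq> f\<^sub>3\<close>, these equations force
  \<open>(g\<^sub>1 + g\<^sub>2) h\<^sub>1 f\<^sub>2 = -1\<close>, and likewise for the two cyclic shifts of \<open>(f, g, h)\<close>.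
  These are exactly the conditions under which \<open>M\<^sub>0 = M(-(f\<^sub>1+f\<^sub>2), -(g\<^sub>1+g\<^sub>2), -(h\<^sub>1+h\<^sub>2))\<close>
  satisfies \<open>M\<^sub>0 M\<^sub>1 M\<^sub>2 = (1 + \<lambda>\<^sup>3) I\<close>, which the normalising factors turn into
  \<open>L\<^sub>0 L\<^sub>1 L\<^sub>2 = I\<close>; then also \<open>L\<^sub>0 L\<^sub>3 L\<^sub>4 = L\<^sub>0 L\<^sub>1 L\<^sub>2 = I\<close>.\<close>

lemma mat_mult_left: "mat a ** A = (\<chi> i j. a * A $ i $ j)"
  unfolding matrix_matrix_mult_def mat_def
  by (auto simp: vec_eq_iff if_distrib if_distribR sum.delta'[OF finite] cong: if_cong)

lemma mat_mult_right: "A ** mat a = (\<chi> i j. A $ i $ j * (a :: 'a::semiring_1))"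
  unfolding matrix_matrix_mult_def mat_def
  by (auto simp: vec_eq_iff if_distrib if_distribR sum.delta'[OF finite] cong: if_cong)

lemma mat_mult_mat: "mat a ** mat b = (mat (a * b) :: 'a::semiring_1^'n^'n)"
  unfolding mat_mult_left by (simp add: vec_eq_iff mat_def)

lemma mat_mult_commute: "mat a ** A = A ** (mat a :: 'a::comm_semiring_1^'n^'n)"
  by (simp add: mat_mult_left mat_mult_right mult.commute)

lemma mat_mult_scaled:
  fixes A B :: "'a::comm_semiring_1^'n^'n"
  shows "mat a ** A ** (mat b ** B) = mat (a * b) ** (A ** B)"
proof -
  have "mat a ** A ** (mat b ** B) = mat a ** (A ** mat b) ** B"
    by (simp only: matrix_mul_assoc)
  also have "\<dots> = mat a ** (mat b ** A) ** B"
    by (simp only: mat_mult_commute)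
  finally show ?thesis
    by (simp only: matrix_mul_assoc mat_mult_mat)
qed

lemma mat_mult_left_cancel:
  fixes A B :: "'a::field^'n^'n"
  assumes "a \<noteq> 0"
  shows "mat a ** A = mat a ** B \<longleftrightarrow> A = B"
proof
  assume "mat a ** A = mat a ** B"
  then have "mat (inverse a) ** mat a ** A = mat (inverse a) ** mat a ** B"
    by (simp add: matrix_mul_assoc[symmetric])
  then show "A = B"
    using assms by (simp add: mat_mult_mat)
qed simp

lemma Lmat_eq_scaled_Mpoly: "Lmat c f g h lam = mat (inverse (c (1 + lam ^ 3))) ** Mpoly f g h lam"
  by (simp add: Lmat_def mat_mult_left)

lemma Mpoly_mult_eq_iff:
  assumes "lam \<noteq> 0"
  shows "Mpoly f1 g1 h1 lam ** Mpoly f2 g2 h2 lam = Mpoly f3 g3 h3 lam ** Mpoly f4 g4 h4 lam \<longleftrightarrow>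
    f1 + f2 = f3 + f4 \<and> g1 + g2 = g3 + g4 \<and> h1 + h2 = h3 + h4 \<and>
    f1 * g2 = f3 * g4 \<and> g1 * h2 = g3 * h4 \<and> h1 * f2 = h3 * f4"
  using assms
  by (simp add: vec_eq_iff forall_3 Mpoly_def matrix_matrix_mult_def sum_3
      ring_distribs[symmetric] mult.assoc conj_ac) (simp only: add.commute)

lemma refactorization_triple_product:
  fixes f1 g1 h1 f2 g2 f3 g3 h3 f4 g4 h4 :: "'a::idom"
  assumes "f1 * g1 * h1 = 1" "f3 * g3 * h3 = 1"
    and "f1 + f2 = f3 + f4" "g1 + g2 = g3 + g4" "f1 * g2 = f3 * g4" "h1 * f2 = h3 * f4"
    and "f1 \<noteq> f3"
  shows "(g1 + g2) * h1 * f2 = -1"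
proof -
  define G where "G = g1 + g2"
  have "G * (f1 - f3) = f1 * g1 - f3 * g3"
    using assms(4,5) unfolding G_def by algebra
  then have G_diff: "G * (f1 - f3) * h1 * h3 = h3 - h1"
    using assms(1,2) by algebra
  have h_diff: "(f1 - f3) * h3 = (h1 - h3) * f2"
    using assms(3,6) by algebra
  have "(G * h1 * f2 + 1) * ((f1 - f3) * h3) = G * (f1 - f3) * h1 * h3 * f2 + (f1 - f3) * h3"
    by (simp add: algebra_simps)
  also have "\<dots> = 0"
    unfolding G_diff h_diff by (simp add: algebra_simps)
  finally have "(G * h1 * f2 + 1) * ((f1 - f3) * h3) = 0" .
  moreover have "h3 \<noteq> 0"
    using assms(2) by auto
  ultimately have "G * h1 * f2 + 1 = 0"
    using assms(7) by simp
  then show ?thesis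
    unfolding G_def by (simp add: eq_neg_iff_add_eq_0)
qed

lemma sum_product_relation:
  fixes a1 b1 c1 a2 b2 :: "'a::idom"
  assumes "a1 * b1 * c1 = 1" "(b1 + b2) * c1 * a2 = -1"
  shows "a1 * b2 = (a1 + a2) * (b1 + b2)"
proof -
  have "(a1 * b2 - (a1 + a2) * (b1 + b2)) * c1 = - (a1 * b1 * c1) - (b1 + b2) * c1 * a2"
    by (simp add: algebra_simps)
  also have "\<dots> = 0"
    using assms by simp
  finally show ?thesis
    using assms(1) by auto
qed

lemma neg_sum_params_product:
  fixes f1 g1 h1 f2 g2 h2 :: "'a::idom"
  assumes "f1 * g1 * h1 = 1" "(g1 + g2) * h1 * f2 = -1" "(h1 + h2) * f1 * g2 = -1"
  shows "(- (f1 + f2)) * (- (g1 + g2)) * (- (h1 + h2)) = 1"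
proof -
  have "(- (f1 + f2)) * (- (g1 + g2)) * (- (h1 + h2)) = - ((h1 + h2) * ((f1 + f2) * (g1 + g2)))"
    by algebra
  also have "\<dots> = - ((h1 + h2) * f1 * g2)"
    using sum_product_relation[OF assms(1,2)] by (simp add: mult.assoc)
  finally show ?thesis
    using assms(3) by simp
qed

lemma Mpoly_triple_product:
  fixes f1 g1 h1 f2 g2 h2 :: complex
  assumes "f1 * g1 * h1 = 1"
    and "(f1 + f2) * g1 * h2 = -1" "(g1 + g2) * h1 * f2 = -1" "(h1 + h2) * f1 * g2 = -1"
  shows "Mpoly (- (f1 + f2)) (- (g1 + g2)) (- (h1 + h2)) lam ** Mpoly f1 g1 h1 lam ** Mpoly f2 g2 h2 lam
    = mat (1 + lam ^ 3)"
proof -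
  have "g1 * h1 * f1 = 1" "h1 * f1 * g1 = 1"
    using assms(1) by (simp_all add: mult_ac)
  then have "f1 * g2 = (f1 + f2) * (g1 + g2)" "g1 * h2 = (g1 + g2) * (h1 + h2)"
    "h1 * f2 = (h1 + h2) * (f1 + f2)"
    using sum_product_relation assms by blast+
  with assms show ?thesis
    by (simp add: vec_eq_iff forall_3 Mpoly_def matrix_matrix_mult_def sum_3 mat_def) algebra
qed

lemma Lmat_mult_eq_iff:
  assumes "c (1 + lam ^ 3) ^ 3 = 1 + lam ^ 3" "lam \<in> Ldom"
  shows "Lmat c f1 g1 h1 lam ** Lmat c f2 g2 h2 lam = Lmat c f3 g3 h3 lam ** Lmat c f4 g4 h4 lam
    \<longleftrightarrow> Mpoly f1 g1 h1 lam ** Mpoly f2 g2 h2 lam = Mpoly f3 g3 h3 lam ** Mpoly f4 g4 h4 lam"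
proof -
  have "c (1 + lam ^ 3) \<noteq> 0"
    using assms by (auto simp: Ldom_def)
  then show ?thesis
    by (simp add: Lmat_eq_scaled_Mpoly mat_mult_scaled mat_mult_left_cancel)
qed

lemma Lmat_triple_product_eq_id:
  assumes "c (1 + lam ^ 3) ^ 3 = 1 + lam ^ 3" "lam \<in> Ldom"
    and "Mpoly f0 g0 h0 lam ** Mpoly f1 g1 h1 lam ** Mpoly f2 g2 h2 lam = mat (1 + lam ^ 3)"
  shows "Lmat c f0 g0 h0 lam ** Lmat c f1 g1 h1 lam ** Lmat c f2 g2 h2 lam = mat 1"
proof -
  have "Lmat c f0 g0 h0 lam ** Lmat c f1 g1 h1 lam ** Lmat c f2 g2 h2 lam
      = mat (inverse (c (1 + lam ^ 3)) ^ 3) ** mat (1 + lam ^ 3)"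
    by (simp add: Lmat_eq_scaled_Mpoly mat_mult_scaled assms(3) power3_eq_cube)
  also have "\<dots> = mat 1"
    using assms(1,2) by (simp add: mat_mult_mat Ldom_def power_inverse)
  finally show ?thesis .
qed

theorem lemma29:
  fixes cbrt :: "complex \<Rightarrow> complex"
    and f1 g1 h1 f2 g2 h2 f3 g3 h3 f4 g4 h4 :: complex
  assumes cbrt: "\<forall>z. cbrt z ^ 3 = z"
    and M1: "f1 * g1 * h1 = 1" and M2: "f2 * g2 * h2 = 1"
    and M3: "f3 * g3 * h3 = 1" and M4: "f4 * g4 * h4 = 1"
    and eq: "\<forall>lam\<in>Ldom. Lmat cbrt f1 g1 h1 lam ** Lmat cbrt f2 g2 h2 lam
                        = Lmat cbrt f3 g3 h3 lam ** Lmat cbrt f4 g4 h4 lam"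
    and d1: "f1 \<noteq> f3" "g1 \<noteq> g3" "h1 \<noteq> h3"
    and d2: "f2 \<noteq> f4" "g2 \<noteq> g4" "h2 \<noteq> h4"
  shows "\<exists>f0 g0 h0. f0 * g0 * h0 = 1 \<and>
           (\<forall>lam\<in>Ldom. Lmat cbrt f0 g0 h0 lam ** Lmat cbrt f1 g1 h1 lam ** Lmat cbrt f2 g2 h2 lam = mat 1
                      \<and> Lmat cbrt f0 g0 h0 lam ** Lmat cbrt f3 g3 h3 lam ** Lmat cbrt f4 g4 h4 lam = mat 1)"
proof -
  have "(1 :: complex) \<in> Ldom"
    by (simp add: Ldom_def)
  then have "Mpoly f1 g1 h1 1 ** Mpoly f2 g2 h2 1 = Mpoly f3 g3 h3 1 ** Mpoly f4 g4 h4 1"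
    using eq cbrt Lmat_mult_eq_iff by blast
  then have sums: "f1 + f2 = f3 + f4" "g1 + g2 = g3 + g4" "h1 + h2 = h3 + h4"
    and products: "f1 * g2 = f3 * g4" "g1 * h2 = g3 * h4" "h1 * f2 = h3 * f4"
    by (simp_all add: Mpoly_mult_eq_iff)
  have rel_g: "(g1 + g2) * h1 * f2 = -1"
    by (rule refactorization_triple_product[OF M1 M3 sums(1,2) products(1,3) d1(1)])
  have rel_h: "(h1 + h2) * f1 * g2 = -1"
    by (rule refactorization_triple_product[OF _ _ sums(2,3) products(2,1) d1(2)])
      (use M1 M3 in \<open>simp_all add: mult_ac\<close>)
  have rel_f: "(f1 + f2) * g1 * h2 = -1"
    by (rule refactorization_triple_product[OF _ _ sums(3,1) products(3,2) d1(3)])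
      (use M1 M3 in \<open>simp_all add: mult_ac\<close>)
  show ?thesis
  proof (intro exI conjI ballI)
    show "(- (f1 + f2)) * (- (g1 + g2)) * (- (h1 + h2)) = 1"
      by (rule neg_sum_params_product[OF M1 rel_g rel_h])
  next
    fix lam assume "lam \<in> Ldom"
    then show "Lmat cbrt (- (f1 + f2)) (- (g1 + g2)) (- (h1 + h2)) lam
      ** Lmat cbrt f1 g1 h1 lam ** Lmat cbrt f2 g2 h2 lam = mat 1"
      using cbrt Mpoly_triple_product[OF M1 rel_f rel_g rel_h] by (blast intro: Lmat_triple_product_eq_id)
    then show "Lmat cbrt (- (f1 + f2)) (- (g1 + g2)) (- (h1 + h2)) lam
      ** Lmat cbrt f3 g3 h3 lam ** Lmat cbrt f4 g4 h4 lam = mat 1"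
      using eq \<open>lam \<in> Ldom\<close> by (simp add: matrix_mul_assoc[symmetric])
  qed
qed

end
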